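(* Let $\mathcal{A}$ and $\mathcal{U}$ be Banach algebras, let $\theta$ be a nonzero character on $\mathcal{A}$, and let $\mathcal{X}$ be a Banach $(\mathcal{A}\times_{\theta}\mathcal{U})$-bimodule, regarded also as a Banach $\mathcal{A}$-bimodule and as a Banach $\mathcal{U}$-bimodule via the induced actions described in the context. Let $D:\mathcal{A}\times_{\theta}\mathcal{U}\to\mathcal{X}$ be a linear mapping. Then the following are equivalent: (i) $D$ is a derivation; (ii) there are linear mappings $\delta_1:\mathcal{A}\to\mathcal{X}$ and $\delta_2:\mathcal{U}\to\mathcal{X}$ with $D((a,u))=\delta_1(a)+\delta_2(u)$ for all $a\in\mathcal{A},u\in\mathcal{U}$, such that $\delta_1$ and $\delta_2$ are derivations and \[a\delta_2(u)+\delta_1(a)u=\theta(a)\delta_2(u)=\delta_2(u)a+u\delta_1(a)\qquad(a\in\mathcal{A},\,u\in\mathcal{U}).\]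
   Context: For Banach algebras $\mathcal{A},\mathcal{U}$ and a nonzero character (nonzero multiplicative linear functional) $\theta$ on $\mathcal{A}$, the Lau product $\mathcal{A}\times_{\theta}\mathcal{U}$ is the Banach space $\mathcal{A}\times\mathcal{U}$ with norm $\|(a,u)\|=\|a\|+\|u\|$ and multiplication $(a,u)(a',u')=(aa',\theta(a)u'+\theta(a')u+uu')$. Given a Banach $(\mathcal{A}\times_{\theta}\mathcal{U})$-bimodule $\mathcal{X}$, it is a Banach $\mathcal{A}$-bimodule via $a x=(a,0)x$, $xa=x(a,0)$, and a Banach $\mathcal{U}$-bimodule via $ux=(0,u)x$, $xu=x(0,u)$. A derivation from a Banach algebra $\mathcal{B}$ into a Banach $\mathcal{B}$-bimodule $\mathcal{Y}$ is a linear map $\delta$ with $\delta(bc)=b\delta(c)+\delta(b)c$. *)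

theory Defs
  imports Complex_Main "HOL-Library.Product_Plus"
begin

definition cplx_banach_space :: "(complex \<Rightarrow> 'a::banach \<Rightarrow> 'a) \<Rightarrow> bool" where
  "cplx_banach_space s \<longleftrightarrow> vector_space s
     \<and> (\<forall>r x. s (complex_of_real r) x = scaleR r x)
     \<and> (\<forall>c x. norm (s c x) = cmod c * norm x)"

text \<open>Complex Banach algebras (submultiplicative complete norm from the type class).\<close>
definition cplx_banach_algebra :: "(complex \<Rightarrow> 'a::{banach,real_normed_algebra} \<Rightarrow> 'a) \<Rightarrow> bool" where
  "cplx_banach_algebra s \<longleftrightarrow> cplx_banach_space s
     \<and> (\<forall>c x y. s c (x * y) = s c x * y \<and> s c (x * y) = x * s c y)"

text \<open>Character: multiplicative linear functional (nonzero-ness stated separately).\<close>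
definition is_character :: "(complex \<Rightarrow> 'a::ring \<Rightarrow> 'a) \<Rightarrow> ('a \<Rightarrow> complex) \<Rightarrow> bool" where
  "is_character s \<theta> \<longleftrightarrow> Vector_Spaces.linear s (*) \<theta> \<and> (\<forall>a b. \<theta> (a * b) = \<theta> a * \<theta> b)"

definition lau_scale :: "(complex \<Rightarrow> 'a \<Rightarrow> 'a) \<Rightarrow> (complex \<Rightarrow> 'u \<Rightarrow> 'u) \<Rightarrow> complex \<Rightarrow> 'a \<times> 'u \<Rightarrow> 'a \<times> 'u" where
  "lau_scale sA sU c p = (sA c (fst p), sU c (snd p))"

definition lau_mult :: "(complex \<Rightarrow> 'u::ring \<Rightarrow> 'u) \<Rightarrow> ('a::ring \<Rightarrow> complex) \<Rightarrow> 'a \<times> 'u \<Rightarrow> 'a \<times> 'u \<Rightarrow> 'a \<times> 'u" where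
  "lau_mult sU \<theta> p q = (fst p * fst q,
      sU (\<theta> (fst p)) (snd q) + sU (\<theta> (fst q)) (snd p) + snd p * snd q)"

definition lau_norm :: "'a::real_normed_vector \<times> 'u::real_normed_vector \<Rightarrow> real" where
  "lau_norm p = norm (fst p) + norm (snd p)"

definition banach_bimodule ::
  "(complex \<Rightarrow> 'b::ab_group_add \<Rightarrow> 'b) \<Rightarrow> ('b \<Rightarrow> 'b \<Rightarrow> 'b) \<Rightarrow> ('b \<Rightarrow> real) \<Rightarrow>
   (complex \<Rightarrow> 'x::banach \<Rightarrow> 'x) \<Rightarrow> ('b \<Rightarrow> 'x \<Rightarrow> 'x) \<Rightarrow> ('x \<Rightarrow> 'b \<Rightarrow> 'x) \<Rightarrow> bool" where
  "banach_bimodule sB mB nB sX lact ract \<longleftrightarrow>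
     cplx_banach_space sX
   \<and> (\<forall>b. Vector_Spaces.linear sX sX (lact b)) \<and> (\<forall>x. Vector_Spaces.linear sB sX (\<lambda>b. lact b x))
   \<and> (\<forall>b. Vector_Spaces.linear sX sX (\<lambda>x. ract x b)) \<and> (\<forall>x. Vector_Spaces.linear sB sX (ract x))
   \<and> (\<forall>b c x. lact (mB b c) x = lact b (lact c x))
   \<and> (\<forall>b c x. ract x (mB b c) = ract (ract x b) c)
   \<and> (\<forall>b c x. ract (lact b x) c = lact b (ract x c))
   \<and> (\<exists>K. \<forall>b x. norm (lact b x) \<le> K * nB b * norm x \<and> norm (ract x b) \<le> K * norm x * nB b)"

definition is_derivation ::
  "('b \<Rightarrow> 'b \<Rightarrow> 'b) \<Rightarrow> ('b \<Rightarrow> 'x::plus \<Rightarrow> 'x) \<Rightarrow> ('x \<Rightarrow> 'b \<Rightarrow> 'x) \<Rightarrow> ('b \<Rightarrow> 'x) \<Rightarrow> bool" where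
  "is_derivation mB lact ract d \<longleftrightarrow> (\<forall>b c. d (mB b c) = lact b (d c) + ract (d b) c)"

end

theory Submission
  imports Defs
begin

text \<open>The elements (a, 0) and (0, u) span the Lau product, and its multiplication on them is
  (a, 0)(b, 0) = (ab, 0), (0, u)(0, v) = (0, uv) and (a, 0)(0, u) = (0, u)(a, 0) = (0, \<theta>(a) u).
  Since D and both module actions are biadditive, the derivation law of D is equivalent to the
  derivation law on these four kinds of products; the first two say that the restrictions of D
  are derivations, the mixed ones are exactly the compatibility identities. Neither the norms
  nor \<theta> \<noteq> 0 play any role.\<close>

lemma character_zero:
  assumes "is_character s \<theta>"
  shows "\<theta> 0 = 0"
  using assms unfolding is_character_def
  by (metis Vector_Spaces.linear_iff module_hom.zero module_hom_iff_linear)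

context
  fixes sU :: "complex \<Rightarrow> 'u::ring \<Rightarrow> 'u" and \<theta> :: "'a::ring \<Rightarrow> complex"
  assumes sU: "module sU" and \<theta>0: "\<theta> 0 = 0"
begin

lemma lau_mult_fst_fst: "lau_mult sU \<theta> (a, 0) (b, 0) = (a * b, 0)"
  using sU by (simp add: lau_mult_def module.scale_zero_right)

lemma lau_mult_snd_snd: "lau_mult sU \<theta> (0, u) (0, v) = (0, u * v)"
  using sU \<theta>0 by (simp add: lau_mult_def module.scale_zero_left)

lemma lau_mult_fst_snd: "lau_mult sU \<theta> (a, 0) (0, u) = (0, sU (\<theta> a) u)"
  using sU \<theta>0 by (simp add: lau_mult_def module.scale_zero_right)

lemma lau_mult_snd_fst: "lau_mult sU \<theta> (0, u) (a, 0) = (0, sU (\<theta> a) u)"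
  using sU \<theta>0 by (simp add: lau_mult_def module.scale_zero_right)

lemma is_derivation_lau_fst:
  fixes lm :: "'a \<times> 'u \<Rightarrow> 'x::plus \<Rightarrow> 'x" and rm :: "'x \<Rightarrow> 'a \<times> 'u \<Rightarrow> 'x"
    and D :: "'a \<times> 'u \<Rightarrow> 'x"
  assumes "is_derivation (lau_mult sU \<theta>) lm rm D"
  shows "is_derivation (*) (\<lambda>a. lm (a, 0)) (\<lambda>x a. rm x (a, 0)) (\<lambda>a. D (a, 0))"
  using assms lau_mult_fst_fst unfolding is_derivation_def by metis

lemma is_derivation_lau_snd:
  fixes lm :: "'a \<times> 'u \<Rightarrow> 'x::plus \<Rightarrow> 'x" and rm :: "'x \<Rightarrow> 'a \<times> 'u \<Rightarrow> 'x"
    and D :: "'a \<times> 'u \<Rightarrow> 'x"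
  assumes "is_derivation (lau_mult sU \<theta>) lm rm D"
  shows "is_derivation (*) (\<lambda>u. lm (0, u)) (\<lambda>x u. rm x (0, u)) (\<lambda>u. D (0, u))"
  using assms lau_mult_snd_snd unfolding is_derivation_def by metis

lemma is_derivation_lau_compat:
  fixes sX :: "complex \<Rightarrow> 'x::ab_semigroup_add \<Rightarrow> 'x"
    and lm :: "'a \<times> 'u \<Rightarrow> 'x \<Rightarrow> 'x" and rm :: "'x \<Rightarrow> 'a \<times> 'u \<Rightarrow> 'x"
    and D :: "'a \<times> 'u \<Rightarrow> 'x"
  assumes der: "is_derivation (lau_mult sU \<theta>) lm rm D"
    and hom: "\<And>c u. D (0, sU c u) = sX c (D (0, u))"
  shows "lm (a, 0) (D (0, u)) + rm (D (a, 0)) (0, u) = sX (\<theta> a) (D (0, u))"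
    and "sX (\<theta> a) (D (0, u)) = rm (D (0, u)) (a, 0) + lm (0, u) (D (a, 0))"
proof -
  have d: "D (lau_mult sU \<theta> p q) = lm p (D q) + rm (D p) q" for p q
    using der unfolding is_derivation_def by blast
  show "lm (a, 0) (D (0, u)) + rm (D (a, 0)) (0, u) = sX (\<theta> a) (D (0, u))"
    using d[of "(a, 0)" "(0, u)"] by (simp add: lau_mult_fst_snd hom)
  show "sX (\<theta> a) (D (0, u)) = rm (D (0, u)) (a, 0) + lm (0, u) (D (a, 0))"
    using d[of "(0, u)" "(a, 0)"] by (simp add: lau_mult_snd_fst hom add.commute)
qed

end

lemma banach_bimodule_additive:
  assumes "banach_bimodule sB mB nB sX lact ract"
  shows "lact b (x + y) = lact b x + lact b y" and "lact (b + c) x = lact b x + lact c x"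
    and "ract (x + y) b = ract x b + ract y b" and "ract x (b + c) = ract x b + ract x c"
  using assms unfolding banach_bimodule_def Vector_Spaces.linear_iff by auto

lemma linear_prod_components:
  assumes D: "Vector_Spaces.linear (lau_scale sA sU) sX D"
    and sA: "vector_space sA" and sU: "vector_space sU"
  shows "Vector_Spaces.linear sA sX (\<lambda>a. D (a, 0))"
    and "Vector_Spaces.linear sU sX (\<lambda>u. D (0, u))"
    and "D (a, u) = D (a, 0) + D (0, u)"
proof -
  have add: "D (p + q) = D p + D q" and scale: "D (lau_scale sA sU c p) = sX c (D p)"
    and sX: "vector_space sX" for p q c
    using D unfolding Vector_Spaces.linear_iff by blast+
  have "sA c 0 = 0" "sU c 0 = 0" for c
    using sA sU by (simp_all add: module.scale_zero_right module_iff_vector_space)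
  then have "D (sA c a, 0) = sX c (D (a, 0))" "D (0, sU c u) = sX c (D (0, u))" for c a u
    by (metis scale lau_scale_def fst_conv snd_conv)+
  then show "Vector_Spaces.linear sA sX (\<lambda>a. D (a, 0))"
    and "Vector_Spaces.linear sU sX (\<lambda>u. D (0, u))"
    unfolding Vector_Spaces.linear_iff using sA sU sX by (auto simp: add[symmetric])
  show "D (a, u) = D (a, 0) + D (0, u)"
    using add[of "(a, 0)" "(0, u)"] by simp
qed

lemma is_derivation_lau_of_components:
  fixes \<delta>1 :: "'a::ring \<Rightarrow> 'x::ab_semigroup_add" and \<delta>2 :: "'u::ring \<Rightarrow> 'x"
  assumes lmL: "\<And>p x y. lm p (x + y) = lm p x + lm p y"
    and lmR: "\<And>p q x. lm (p + q) x = lm p x + lm q x"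
    and rmL: "\<And>p x y. rm (x + y) p = rm x p + rm y p"
    and rmR: "\<And>p q x. rm x (p + q) = rm x p + rm x q"
    and add2: "\<And>u v. \<delta>2 (u + v) = \<delta>2 u + \<delta>2 v" and scale2: "\<And>c u. \<delta>2 (sU c u) = sX c (\<delta>2 u)"
    and D: "\<And>a u. D (a, u) = \<delta>1 a + \<delta>2 u"
    and d1: "\<And>a b. \<delta>1 (a * b) = lm (a, 0) (\<delta>1 b) + rm (\<delta>1 a) (b, 0)"
    and d2: "\<And>u v. \<delta>2 (u * v) = lm (0, u) (\<delta>2 v) + rm (\<delta>2 u) (0, v)"
    and c1: "\<And>a u. lm (a, 0) (\<delta>2 u) + rm (\<delta>1 a) (0, u) = sX (\<theta> a) (\<delta>2 u)"
    and c2: "\<And>a u. sX (\<theta> a) (\<delta>2 u) = rm (\<delta>2 u) (a, 0) + lm (0, u) (\<delta>1 a)"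
  shows "is_derivation (lau_mult sU \<theta>) lm rm D"
  unfolding is_derivation_def
proof (intro allI)
  fix p q :: "'a \<times> 'u"
  obtain a u b v where p: "p = (a, u)" and q: "q = (b, v)" by fastforce
  have lm_split: "lm (a, u) x = lm (a, 0) x + lm (0, u) x"
    and rm_split: "rm x (b, v) = rm x (b, 0) + rm x (0, v)" for x
    using lmR[of "(a, 0)" "(0, u)"] rmR[of _ "(b, 0)" "(0, v)"] by simp_all
  have "D (lau_mult sU \<theta> p q)
      = \<delta>1 (a * b) + (sX (\<theta> a) (\<delta>2 v) + sX (\<theta> b) (\<delta>2 u) + \<delta>2 (u * v))"
    by (simp add: p q lau_mult_def D add2 scale2)
  also have "\<dots> = (lm (a, 0) (\<delta>1 b) + rm (\<delta>1 a) (b, 0)) +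
      ((lm (a, 0) (\<delta>2 v) + rm (\<delta>1 a) (0, v)) + (rm (\<delta>2 u) (b, 0) + lm (0, u) (\<delta>1 b))
       + (lm (0, u) (\<delta>2 v) + rm (\<delta>2 u) (0, v)))"
    by (simp add: d1 d2 c1 c2)
  also have "\<dots> = lm p (D q) + rm (D p) q"
    unfolding p q D lm_split rm_split lmL rmL by (simp only: ac_simps)
  finally show "D (lau_mult sU \<theta> p q) = lm p (D q) + rm (D p) q" .
qed

theorem theorem2p1:
  fixes sA :: "complex \<Rightarrow> 'a::{banach,real_normed_algebra} \<Rightarrow> 'a"
    and sU :: "complex \<Rightarrow> 'u::{banach,real_normed_algebra} \<Rightarrow> 'u"
    and sX :: "complex \<Rightarrow> 'x::banach \<Rightarrow> 'x"
    and \<theta> :: "'a \<Rightarrow> complex"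
    and lm :: "'a \<times> 'u \<Rightarrow> 'x \<Rightarrow> 'x" and rm :: "'x \<Rightarrow> 'a \<times> 'u \<Rightarrow> 'x"
    and D :: "'a \<times> 'u \<Rightarrow> 'x"
  assumes A: "cplx_banach_algebra sA"
    and U: "cplx_banach_algebra sU"
    and chr: "is_character sA \<theta>" and nz: "\<theta> \<noteq> (\<lambda>_. 0)"
    and X: "banach_bimodule (lau_scale sA sU) (lau_mult sU \<theta>) lau_norm sX lm rm"
    and linD: "Vector_Spaces.linear (lau_scale sA sU) sX D"
  shows "is_derivation (lau_mult sU \<theta>) lm rm D \<longleftrightarrow>
    (\<exists>\<delta>1 \<delta>2. Vector_Spaces.linear sA sX \<delta>1 \<and> Vector_Spaces.linear sU sX \<delta>2
       \<and> (\<forall>a u. D (a, u) = \<delta>1 a + \<delta>2 u)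
       \<and> is_derivation (*) (\<lambda>a x. lm (a, 0) x) (\<lambda>x a. rm x (a, 0)) \<delta>1
       \<and> is_derivation (*) (\<lambda>u x. lm (0, u) x) (\<lambda>x u. rm x (0, u)) \<delta>2
       \<and> (\<forall>a u. lm (a, 0) (\<delta>2 u) + rm (\<delta>1 a) (0, u) = sX (\<theta> a) (\<delta>2 u)
              \<and> sX (\<theta> a) (\<delta>2 u) = rm (\<delta>2 u) (a, 0) + lm (0, u) (\<delta>1 a)))"
    (is "?der \<longleftrightarrow> ?components")
proof -
  have sA: "vector_space sA" and sU: "vector_space sU"
    using A U unfolding cplx_banach_algebra_def cplx_banach_space_def by blast+
  then have sU_module: "module sU"
    by (simp add: module_iff_vector_space)
  note \<theta>0 = character_zero[OF chr]
  note components = linear_prod_components[OF linD sA sU]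
  note lin2 = components(2)[unfolded Vector_Spaces.linear_iff]
  show ?thesis
  proof
    assume der: ?der
    show ?components
      using components lin2 is_derivation_lau_fst[OF sU_module \<theta>0 der]
        is_derivation_lau_snd[OF sU_module \<theta>0 der] is_derivation_lau_compat[OF sU_module \<theta>0 der]
      by (intro exI[of _ "\<lambda>a. D (a, 0)"] exI[of _ "\<lambda>u. D (0, u)"]) blast
  next
    assume ?components
    then show ?der
      unfolding is_derivation_def Vector_Spaces.linear_iff
      by (elim exE conjE, intro is_derivation_lau_of_components[unfolded is_derivation_def])
        (use banach_bimodule_additive[OF X] in auto)
  qed
qed

end
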